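(* Let $K$ be a field of characteristic $\neq2$ with involution $a\mapsto\bar a$, and let $\Phi$ be an $n\times n$ Frobenius block with characteristic polynomial $\chi(x)=p(x)^s=x^n+\alpha_1x^{n-1}+\dots+\alpha_n$, $p$ monic irreducible. A nonsingular matrix $X$ with $X=X^*\Phi$ exists if and only if (A1) $\chi(x)=\chi^\vee(x)$, and (A2) $p(x)\neq x+(-1)^{n-1}$ in the case of the identity involution. When these hold, one can take $X=[a_{j-i}]_{i,j=1}^n$, where $a_{1-n},\dots,a_{n-1}$ are terms of the $\chi$-recurrent sequence determined by the fragment $(a_{-m},\dots,a_{m-1})=(\bar a,0,\dots,0,a)$ of length $2m\in\{n,n+1\}$, in which: (a) $a=1$ if $n=2m$, except when $p(x)=x+\alpha$ with $\alpha^{n-1}=-1$; (b) $a=k$ if $n=2m$, $p(x)=x+\alpha$, $\alpha^{n-1}=-1$, and also if $n=2m-1$, $p(x)=x+1$; (c) $a=\chi(-1)$ if $n=2m-1$, $p(x)\ne x+1$.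
   Context: $M^*=[\bar m_{ji}]$ for $M=[m_{ij}]$. For $f=a_0x^n+\dots+a_n$ with $a_n\ne0$, $f^\vee(x)=\bar a_n^{-1}(\bar a_nx^n+\dots+\bar a_1x+\bar a_0)$. A Frobenius block is an $n\times n$ matrix with ones on the subdiagonal, last column $(-c_n,\dots,-c_1)^T$, zeros elsewhere, and characteristic polynomial $x^n+c_1x^{n-1}+\dots+c_n$ a power of an irreducible polynomial. For $f(x)=\gamma_0x^m+\dots+\gamma_m$, a sequence $(a_q,\dots,a_r)$ is $f$-recurrent if $\gamma_0a_{l+m}+\gamma_1a_{l+m-1}+\dots+\gamma_ma_l=0$ for $q\le l\le r-m$. In the case of a nonidentity involution, $k$ denotes a fixed element with $k=-\bar k\ne0$. *)

theory Defs
  imports "Jordan_Normal_Form.Matrix" "HOL-Computational_Algebra.Polynomial"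
begin

definition involution :: "('a::field \<Rightarrow> 'a) \<Rightarrow> bool" where
  "involution cj \<longleftrightarrow> (\<forall>a b. cj (a + b) = cj a + cj b) \<and> (\<forall>a b. cj (a * b) = cj a * cj b)
     \<and> (\<forall>a. cj (cj a) = a)"

definition mat_star :: "('a \<Rightarrow> 'a) \<Rightarrow> 'a mat \<Rightarrow> 'a mat" where
  "mat_star cj M = transpose_mat (map_mat cj M)"

text \<open>f^\<or>: for f = a0 x^n + ... + an (an \<noteq> 0),
  f^\<or>(x) = conj(an)^{-1} (conj(an) x^n + ... + conj(a1) x + conj(a0)).
  In terms of Isabelle coefficients (coeff f i = coefficient of x^i), the coefficient of x^i
  of f^\<or> is conj(coeff f (n-i)) / conj(coeff f 0).\<close>
definition poly_vee :: "('a::field \<Rightarrow> 'a) \<Rightarrow> 'a poly \<Rightarrow> 'a poly" where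
  "poly_vee cj f = smult (inverse (cj (coeff f 0))) (map_poly cj (reflect_poly f))"

text \<open>Frobenius (companion) block of a monic polynomial f = x^n + c1 x^{n-1} + ... + cn:
  ones on the subdiagonal, last column (-cn, ..., -c1)^T (0-indexed row i holds -coeff f i).\<close>
definition frobenius_block :: "'a::comm_ring_1 poly \<Rightarrow> 'a mat" where
  "frobenius_block f = mat (degree f) (degree f)
     (\<lambda>(i, j). if j = degree f - 1 then - coeff f i else if i = j + 1 then 1 else 0)"

text \<open>f-recurrence of (a_q, ..., a_r) for f = g0 x^m + ... + gm:
  g0 a_{l+m} + ... + gm a_l = 0 for q \<le> l \<le> r - m.  Note g_j = coeff f (m - j).\<close>
definition recurrent :: "'a::comm_ring_1 poly \<Rightarrow> int \<Rightarrow> int \<Rightarrow> (int \<Rightarrow> 'a) \<Rightarrow> bool" where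
  "recurrent f q r a \<longleftrightarrow>
     (\<forall>l. q \<le> l \<and> l \<le> r - int (degree f) \<longrightarrow>
        (\<Sum>i\<le>degree f. coeff f i * a (l + int i)) = 0)"

definition toeplitz_mat :: "nat \<Rightarrow> (int \<Rightarrow> 'a) \<Rightarrow> 'a mat" where
  "toeplitz_mat n a = mat n n (\<lambda>(i, j). a (int j - int i))"

text \<open>The parameter a of the initial fragment, chosen by cases (a),(b),(c);
  k is the fixed element with k = - conj k \<noteq> 0 (nonidentity involution).\<close>
definition frag_param :: "'a::field poly \<Rightarrow> 'a poly \<Rightarrow> nat \<Rightarrow> 'a \<Rightarrow> 'a" where
  "frag_param chi p n k =
     (if even n then
        (if degree p = 1 \<and> coeff p 0 ^ (n - 1) = -1 then k else 1)
      else
        (if p = [:1, 1:] then k else poly chi (-1)))"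

definition has_fragment :: "('a::zero \<Rightarrow> 'a) \<Rightarrow> nat \<Rightarrow> 'a \<Rightarrow> (int \<Rightarrow> 'a) \<Rightarrow> bool" where
  "has_fragment cj m a0 a \<longleftrightarrow>
     a (- int m) = cj a0 \<and> a (int m - 1) = a0 \<and> (\<forall>j. - int m < j \<and> j < int m - 1 \<longrightarrow> a j = 0)"

end

theory Submission
  imports Defs "HOL-Computational_Algebra.Polynomial_Factorial" "Jordan_Normal_Form.Determinant"
begin

text \<open>Write \<open>E\<close> for the shift of integer-indexed sequences. The equation \<open>X = X\<^sup>* \<Phi>\<close> forces
  \<open>X = [a\<^sub>j\<^sub>-\<^sub>i]\<close> for a \<open>\<chi>\<close>-recurrent sequence with \<open>a\<^sub>d = cj (a\<^sub>-\<^sub>1\<^sub>-\<^sub>d)\<close>, and every such Toeplitz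
  matrix is a solution. Such a matrix is singular exactly when a nonzero polynomial of degree
  \<open>< n\<close> annihilates the sequence, i.e., as \<open>\<chi> = p\<^sup>s\<close>, when \<open>p\<^sup>s\<^sup>-\<^sup>1(E) a = 0\<close>.

  Necessity: by the symmetry, the conjugated reversal of \<open>\<chi>\<close> annihilates the sequence too, and
  invertibility forces it to be a multiple of \<open>\<chi>\<close>, which is (A1). For the identity involution and
  \<open>p = x + (-1)\<^sup>n\<^sup>-\<^sup>1\<close>, an antipalindromic multiple of \<open>p\<^sup>n\<^sup>-\<^sup>1\<close> kills the symmetric sequence at its
  centre, so the \<open>p\<close>-recurrent sequence \<open>p\<^sup>n\<^sup>-\<^sup>1(E) a\<close> has a zero and vanishes, contradicting
  invertibility; this is (A2).

  Sufficiency: by (A1) the mirror image of a \<open>\<chi>\<close>-recurrent sequence is again \<open>\<chi>\<close>-recurrent, so the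
  sequence generated by the fragment \<open>(cj a, 0, \<dots>, 0, a)\<close> is symmetric, and the choice of \<open>a\<close> makes
  \<open>p\<^sup>s\<^sup>-\<^sup>1(E) a\<close> nonzero at the start of the fragment.\<close>

section \<open>Shift operators and recurrent sequences\<close>

text \<open>\<open>poly_shift F b\<close> is \<open>F(E) b\<close> for the shift \<open>(E b)\<^sub>l = b\<^sub>l\<^sub>+\<^sub>1\<close>; thus \<open>recurrent f q r a\<close>
  says that \<open>poly_shift f a\<close> vanishes for \<open>q \<le> l \<le> r - degree f\<close>.\<close>

definition poly_shift :: "'a::comm_ring_1 poly \<Rightarrow> (int \<Rightarrow> 'a) \<Rightarrow> int \<Rightarrow> 'a" where
  "poly_shift F b l = (\<Sum>i\<le>degree F. coeff F i * b (l + int i))"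

definition annihilates :: "'a::comm_ring_1 poly \<Rightarrow> (int \<Rightarrow> 'a) \<Rightarrow> bool" where
  "annihilates F b \<longleftrightarrow> (\<forall>l. poly_shift F b l = 0)"

lemma poly_shift_conv_sum:
  "degree F \<le> N \<Longrightarrow> poly_shift F b l = (\<Sum>i\<le>N. coeff F i * b (l + int i))"
  unfolding poly_shift_def by (rule sum.mono_neutral_left) (auto simp: coeff_eq_0)

lemma poly_shift_pCons: "poly_shift (pCons c F) b l = c * b l + poly_shift F b (l + 1)"
proof -
  have "poly_shift (pCons c F) b l = (\<Sum>i\<le>Suc (degree F). coeff (pCons c F) i * b (l + int i))"
    by (rule poly_shift_conv_sum) (simp add: degree_pCons_le)
  also have "\<dots> = c * b l + (\<Sum>i\<le>degree F. coeff F i * b (l + 1 + int i))"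
    by (subst sum.atMost_Suc_shift) (simp add: add_ac)
  finally show ?thesis by (simp add: poly_shift_def)
qed

lemma poly_shift_0 [simp]: "poly_shift 0 b l = 0"
  by (simp add: poly_shift_def)

lemma poly_shift_zero_seq [simp]: "poly_shift F (\<lambda>_. 0) l = 0"
  by (simp add: poly_shift_def)

lemma poly_shift_add: "poly_shift (F + G) b l = poly_shift F b l + poly_shift G b l"
proof -
  let ?N = "max (degree F) (degree G)"
  have "poly_shift (F + G) b l = (\<Sum>i\<le>?N. coeff (F + G) i * b (l + int i))"
    by (rule poly_shift_conv_sum) (simp add: degree_add_le)
  also have "\<dots> = (\<Sum>i\<le>?N. coeff F i * b (l + int i)) + (\<Sum>i\<le>?N. coeff G i * b (l + int i))"
    by (simp add: distrib_right sum.distrib)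
  finally show ?thesis by (simp add: poly_shift_conv_sum[symmetric])
qed

lemma poly_shift_smult: "poly_shift (smult c F) b l = c * poly_shift F b l"
proof -
  have "poly_shift (smult c F) b l = (\<Sum>i\<le>degree F. coeff (smult c F) i * b (l + int i))"
    by (rule poly_shift_conv_sum) (simp add: degree_smult_le)
  then show ?thesis by (simp add: poly_shift_def sum_distrib_left mult.assoc)
qed

lemma poly_shift_diff: "poly_shift (F - G) b l = poly_shift F b l - poly_shift G b l"
  using poly_shift_add[of F "- G" b l] poly_shift_smult[of "- 1" G b l] by simp

lemma poly_shift_mult: "poly_shift (F * G) b l = poly_shift F (poly_shift G b) l"
proof (induction F arbitrary: l rule: pCons_induct)
  case (pCons c F)
  have "pCons c F * G = smult c G + pCons 0 (F * G)" by (simp add: mult_pCons_left)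
  then show ?case using pCons by (simp add: poly_shift_add poly_shift_smult poly_shift_pCons)
qed simp

lemma poly_shift_seq_diff: "poly_shift F (\<lambda>j. u j - v j) l = poly_shift F u l - poly_shift F v l"
  by (simp add: poly_shift_def algebra_simps sum_subtractf)

lemma poly_shift_cong:
  "(\<And>i. i \<le> degree F \<Longrightarrow> u (l + int i) = v (l + int i)) \<Longrightarrow> poly_shift F u l = poly_shift F v l"
  unfolding poly_shift_def by (rule sum.cong) auto

lemma poly_shift_split_last:
  "poly_shift F b l = (\<Sum>i<degree F. coeff F i * b (l + int i)) + lead_coeff F * b (l + int (degree F))"
  by (simp add: poly_shift_def lessThan_Suc_atMost[symmetric])

lemma poly_shift_split_first:
  "poly_shift F b l = coeff F 0 * b l + (\<Sum>i\<in>{1..degree F}. coeff F i * b (l + int i))"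
proof -
  have "{..degree F} = insert 0 {1..degree F}" by auto
  then show ?thesis by (simp add: poly_shift_def)
qed

lemma annihilates_poly_shift:
  assumes "annihilates C b" shows "annihilates C (poly_shift F b)"
  unfolding annihilates_def
proof
  fix l
  have "poly_shift C (poly_shift F b) l = poly_shift F (poly_shift C b) l"
    by (simp flip: poly_shift_mult add: mult.commute)
  also have "poly_shift C b = (\<lambda>_. 0)" using assms by (auto simp: annihilates_def)
  finally show "poly_shift C (poly_shift F b) l = 0" by simp
qed

lemma annihilates_seq_diff:
  "annihilates C u \<Longrightarrow> annihilates C v \<Longrightarrow> annihilates C (\<lambda>j. u j - v j)"
  by (simp add: annihilates_def poly_shift_seq_diff)

lemma recurrent_window_vanishing:
  assumes monic: "lead_coeff C = 1"
    and rec: "\<And>l. Q \<le> l \<Longrightarrow> l + int (degree C) \<le> R \<Longrightarrow> poly_shift C u l = 0"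
    and init: "\<And>j. Q \<le> j \<Longrightarrow> j < Q + int (degree C) \<Longrightarrow> u j = 0"
    and j: "Q \<le> j" "j \<le> R"
  shows "u j = 0"
proof -
  obtain k where k: "j = Q + int k" using j(1) zle_iff_zadd by blast
  show ?thesis using j(2) unfolding k
  proof (induction k rule: less_induct)
    case (less k)
    show ?case
    proof (cases "k < degree C")
      case True
      then show ?thesis by (intro init) auto
    next
      case False
      define l where "l = Q + int k - int (degree C)"
      have "u (l + int i) = 0" if "i < degree C" for i
        using less.IH[of "k - degree C + i"] less.prems that False by (simp add: l_def algebra_simps)
      then have "(\<Sum>i<degree C. coeff C i * u (l + int i)) = 0" by simp
      moreover have "poly_shift C u l = 0" using rec less.prems False by (simp add: l_def)
      ultimately show ?thesis using monic by (simp add: poly_shift_split_last l_def)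
    qed
  qed
qed

lemma annihilated_seq_vanishing_before:
  fixes C :: "'a::idom poly"
  assumes c0: "coeff C 0 \<noteq> 0" and rec: "annihilates C u"
    and init: "\<And>j. c \<le> j \<Longrightarrow> j < c + int (degree C) \<Longrightarrow> u j = 0"
    and j: "j < c + int (degree C)"
  shows "u j = 0"
proof -
  obtain k where k: "j = c + int (degree C) - 1 - int k" using j
    by (metis add_diff_cancel_left' diff_diff_eq2 zle_iff_zadd zle_diff1_eq)
  show ?thesis unfolding k
  proof (induction k rule: less_induct)
    case (less k)
    show ?case
    proof (cases "k < degree C")
      case True
      then show ?thesis by (intro init) auto
    next
      case False
      define l where "l = c + int (degree C) - 1 - int k"
      have "u (l + int i) = 0" if "i \<in> {1..degree C}" for i
        using less.IH[of "k - i"] that False by (simp add: l_def algebra_simps)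
      then have "(\<Sum>i\<in>{1..degree C}. coeff C i * u (l + int i)) = 0" by simp
      moreover have "poly_shift C u l = 0" using rec by (simp add: annihilates_def)
      ultimately show ?thesis using c0 by (simp add: poly_shift_split_first l_def)
    qed
  qed
qed

lemma annihilated_seq_eq_zero:
  fixes C :: "'a::idom poly"
  assumes monic: "lead_coeff C = 1" and c0: "coeff C 0 \<noteq> 0" and rec: "annihilates C u"
    and init: "\<And>j. c \<le> j \<Longrightarrow> j < c + int (degree C) \<Longrightarrow> u j = 0"
  shows "u j = 0"
proof (cases "c \<le> j")
  case True
  show ?thesis
    by (rule recurrent_window_vanishing[OF monic _ init True order.refl])
      (use rec in \<open>simp add: annihilates_def\<close>)
next
  case False
  show ?thesis
    by (rule annihilated_seq_vanishing_before[where c = c, OF c0 rec init]) (use False in auto)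
qed

function recurrent_extension :: "'a::field poly \<Rightarrow> int \<Rightarrow> (int \<Rightarrow> 'a) \<Rightarrow> int \<Rightarrow> 'a" where
  "recurrent_extension C Q w j =
     (if Q \<le> j \<and> j < Q + int (degree C) then w j
      else if Q + int (degree C) \<le> j then
        - (\<Sum>i<degree C. coeff C i * recurrent_extension C Q w (j - int (degree C) + int i))
      else - (\<Sum>i\<in>{1..degree C}. coeff C i * recurrent_extension C Q w (j + int i)) / coeff C 0)"
  by auto
termination
  by (relation "measure (\<lambda>(C, Q, w, j).
        if Q \<le> j \<and> j < Q + int (degree C) then 0 else 1 + nat \<bar>j - Q\<bar>)") auto

declare recurrent_extension.simps [simp del]

lemma recurrent_extension_init:
  "Q \<le> j \<Longrightarrow> j < Q + int (degree C) \<Longrightarrow> recurrent_extension C Q w j = w j"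
  by (simp add: recurrent_extension.simps)

lemma annihilates_recurrent_extension:
  assumes monic: "lead_coeff C = 1" and c0: "coeff C 0 \<noteq> 0"
  shows "annihilates C (recurrent_extension C Q w)"
  unfolding annihilates_def
proof
  fix l
  show "poly_shift C (recurrent_extension C Q w) l = 0"
  proof (cases "Q \<le> l")
    case True
    then show ?thesis using monic
      by (simp add: poly_shift_split_last recurrent_extension.simps[of C Q w "l + int (degree C)"])
  next
    case False
    then show ?thesis using c0
      by (simp add: poly_shift_split_first recurrent_extension.simps[of C Q w l])
  qed
qed

lemma recurrent_window_extends:
  fixes C :: "'a::field poly"
  assumes monic: "lead_coeff C = 1" and c0: "coeff C 0 \<noteq> 0"
    and rec: "\<And>l. Q \<le> l \<Longrightarrow> l + int (degree C) \<le> R \<Longrightarrow> poly_shift C a l = 0"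
  obtains b where "annihilates C b" "\<And>j. Q \<le> j \<Longrightarrow> j \<le> R \<Longrightarrow> b j = a j"
proof
  let ?b = "recurrent_extension C Q a"
  show b: "annihilates C ?b" using annihilates_recurrent_extension[OF monic c0] .
  fix j assume j: "Q \<le> j" "j \<le> R"
  have "?b j - a j = 0"
  proof (rule recurrent_window_vanishing[OF monic _ _ j])
    show "poly_shift C (\<lambda>j. ?b j - a j) l = 0" if "Q \<le> l" "l + int (degree C) \<le> R" for l
      using b rec[OF that] by (simp add: poly_shift_seq_diff annihilates_def)
    show "?b i - a i = 0" if "Q \<le> i" "i < Q + int (degree C)" for i
      using that by (simp add: recurrent_extension_init)
  qed
  then show "?b j = a j" by simp
qed

lemma recurrent_fragment_exists:
  fixes C :: "'a::field poly"
  assumes monic: "lead_coeff C = 1" and c0: "coeff C 0 \<noteq> 0" and n: "n = degree C" "n \<noteq> 0"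
    and m: "m = (n + 1) div 2" and odd: "odd n \<Longrightarrow> coeff C 0 * c + a = 0"
  obtains b where "annihilates C b" "b (- int m) = c" "b (int m - 1) = a"
    "\<And>j. - int m < j \<Longrightarrow> j < int m - 1 \<Longrightarrow> b j = 0"
proof -
  have nm: "n = 2 * m \<or> n = 2 * m - 1" "m \<ge> 1" using m n(2) by presburger+
  define w where "w j = (if j = - int m then c else if j = int m - 1 then a else 0)" for j
  let ?b = "recurrent_extension C (- int m) w"
  have rec: "annihilates C ?b" by (rule annihilates_recurrent_extension[OF monic c0])
  have window: "?b j = w j" if "- int m \<le> j" "j < int n - int m" for j
    using that n by (simp add: recurrent_extension_init)
  have first: "?b (- int m) = c" using window[of "- int m"] nm by (auto simp: w_def)
  have zeros: "?b j = 0" if "- int m < j" "j < int m - 1" for j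
    using window[of j] that nm by (auto simp: w_def)
  have "?b (int m - 1) = a"
  proof (cases "n = 2 * m")
    case True
    then show ?thesis using window[of "int m - 1"] nm by (simp add: w_def)
  next
    case False
    then have "n = 2 * m - 1" "odd n" using nm by presburger+
    have "poly_shift C ?b (- int m) = (\<Sum>i\<in>{0, n}. coeff C i * ?b (- int m + int i))"
      unfolding poly_shift_def using \<open>n = 2 * m - 1\<close> nm(2) n
      by (intro sum.mono_neutral_right) (auto intro!: zeros)
    moreover have "- int m + int n = int m - 1" using \<open>n = 2 * m - 1\<close> nm(2) by simp
    ultimately have "coeff C 0 * c + ?b (int m - 1) = 0"
      using rec first monic n by (simp add: annihilates_def)
    then show ?thesis using odd[OF \<open>odd n\<close>] by (metis add_left_cancel)
  qed
  with rec first zeros show ?thesis using that by blast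
qed

section \<open>Toeplitz matrices of recurrent sequences\<close>

lemma invertible_mat_iff_trivial_kernel:
  fixes A :: "'a::field mat"
  assumes A: "A \<in> carrier_mat n n"
  shows "invertible_mat A \<longleftrightarrow> (\<forall>v \<in> carrier_vec n. A *\<^sub>v v = 0\<^sub>v n \<longrightarrow> v = 0\<^sub>v n)"
proof
  assume "invertible_mat A"
  then obtain B where AB: "A * B = 1\<^sub>m n" and BA: "B * A = 1\<^sub>m (dim_row B)"
    using A unfolding invertible_mat_def inverts_mat_def by auto
  have "dim_col B = n" using arg_cong[OF AB, of dim_col] by simp
  moreover have "dim_row B = n" using arg_cong[OF BA, of dim_col] A by simp
  ultimately have B: "B \<in> carrier_mat n n" by auto
  show "\<forall>v \<in> carrier_vec n. A *\<^sub>v v = 0\<^sub>v n \<longrightarrow> v = 0\<^sub>v n"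
  proof (intro ballI impI)
    fix v :: "'a vec" assume v: "v \<in> carrier_vec n" and Av: "A *\<^sub>v v = 0\<^sub>v n"
    have "v = (B * A) *\<^sub>v v" using BA B v by simp
    also have "\<dots> = B *\<^sub>v (A *\<^sub>v v)" using A B v by (simp add: assoc_mult_mat_vec)
    also have "\<dots> = 0\<^sub>v n" using Av B by (intro eq_vecI) (simp_all add: mult_mat_vec_def)
    finally show "v = 0\<^sub>v n" .
  qed
next
  assume "\<forall>v \<in> carrier_vec n. A *\<^sub>v v = 0\<^sub>v n \<longrightarrow> v = 0\<^sub>v n"
  then have "det A \<noteq> 0" using det_0_iff_vec_prod_zero_field[OF A] by auto
  from det_non_zero_imp_unit[OF A this, of "()"]
  obtain B where "B \<in> carrier_mat n n" "B * A = 1\<^sub>m n" "A * B = 1\<^sub>m n"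
    unfolding Units_def ring_mat_def by auto
  then show "invertible_mat A" using A
    unfolding invertible_mat_def inverts_mat_def square_mat.simps by auto
qed

lemma toeplitz_mat_carrier [simp]: "toeplitz_mat n a \<in> carrier_mat n n"
  and toeplitz_mat_dim [simp]: "dim_row (toeplitz_mat n a) = n" "dim_col (toeplitz_mat n a) = n"
  by (simp_all add: toeplitz_mat_def)

lemma toeplitz_mat_index [simp]:
  "i < n \<Longrightarrow> j < n \<Longrightarrow> toeplitz_mat n a $$ (i, j) = a (int j - int i)"
  by (simp add: toeplitz_mat_def)

lemma toeplitz_mat_cong:
  "(\<And>d. - int n < d \<Longrightarrow> d < int n \<Longrightarrow> a d = b d) \<Longrightarrow> toeplitz_mat n a = toeplitz_mat n b"
  by (rule eq_matI) auto

lemma toeplitz_mat_mult_coeff_vec: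
  assumes "degree V < n" "i < n"
  shows "(toeplitz_mat n b *\<^sub>v vec n (coeff V)) $ i = poly_shift V b (- int i)"
proof -
  have "(toeplitz_mat n b *\<^sub>v vec n (coeff V)) $ i = (\<Sum>j<n. b (int j - int i) * coeff V j)"
    using assms by (simp add: mult_mat_vec_def scalar_prod_def row_def atLeast0LessThan)
  also have "\<dots> = (\<Sum>j\<le>n - 1. coeff V j * b (- int i + int j))"
    using assms by (intro sum.cong) (auto simp: mult.commute)
  also have "\<dots> = poly_shift V b (- int i)"
    using assms by (intro poly_shift_conv_sum[symmetric]) auto
  finally show ?thesis .
qed

lemma toeplitz_mat_singular_iff:
  fixes b :: "int \<Rightarrow> 'a::field"
  shows "\<not> invertible_mat (toeplitz_mat n b) \<longleftrightarrow>
    (\<exists>V. V \<noteq> 0 \<and> degree V < n \<and> (\<forall>i<n. poly_shift V b (- int i) = 0))"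
proof
  assume "\<not> invertible_mat (toeplitz_mat n b)"
  then obtain v where v: "v \<in> carrier_vec n" "v \<noteq> 0\<^sub>v n" "toeplitz_mat n b *\<^sub>v v = 0\<^sub>v n"
    using invertible_mat_iff_trivial_kernel[OF toeplitz_mat_carrier] by auto
  define V where "V = Poly (list_of_vec v)"
  have coeff_V: "coeff V j = (if j < n then v $ j else 0)" for j
    using v(1) by (auto simp: V_def nth_default_def)
  have vV: "vec n (coeff V) = v" using v(1) coeff_V by (intro eq_vecI) auto
  have "n > 0" using v(1,2) by (intro Nat.gr0I) auto
  then have "degree V < n" by (intro le_less_trans[OF degree_le[of "n - 1"]]) (auto simp: coeff_V)
  moreover have "V \<noteq> 0" using v(2) vV by auto
  moreover have "poly_shift V b (- int i) = 0" if "i < n" for i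
    using toeplitz_mat_mult_coeff_vec[OF \<open>degree V < n\<close> that, of b] v(3) vV that by simp
  ultimately show "\<exists>V. V \<noteq> 0 \<and> degree V < n \<and> (\<forall>i<n. poly_shift V b (- int i) = 0)" by blast
next
  assume "\<exists>V. V \<noteq> 0 \<and> degree V < n \<and> (\<forall>i<n. poly_shift V b (- int i) = 0)"
  then obtain V where V: "V \<noteq> 0" "degree V < n" "\<And>i. i < n \<Longrightarrow> poly_shift V b (- int i) = 0"
    by blast
  have "vec n (coeff V) $ degree V \<noteq> 0\<^sub>v n $ degree V" using V(1,2) by simp
  then have "vec n (coeff V) \<noteq> 0\<^sub>v n" by metis
  moreover have "toeplitz_mat n b *\<^sub>v vec n (coeff V) = 0\<^sub>v n"
    using toeplitz_mat_mult_coeff_vec[OF V(2)] V(3) by (intro eq_vecI) auto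
  ultimately show "\<not> invertible_mat (toeplitz_mat n b)"
    using invertible_mat_iff_trivial_kernel[OF toeplitz_mat_carrier, of n b] by auto
qed

lemma invertible_toeplitz_annihilator_eq_0:
  fixes b :: "int \<Rightarrow> 'a::field"
  assumes "invertible_mat (toeplitz_mat n b)" "degree V < n"
    and "\<And>i. i < n \<Longrightarrow> poly_shift V b (- int i) = 0"
  shows "V = 0"
  using assms toeplitz_mat_singular_iff by blast

lemma annihilates_if_window_annihilates:
  fixes C :: "'a::idom poly"
  assumes monic: "lead_coeff C = 1" and c0: "coeff C 0 \<noteq> 0" and rec: "annihilates C b"
    and window: "\<And>j. c \<le> j \<Longrightarrow> j < c + int (degree C) \<Longrightarrow> poly_shift V b j = 0"
  shows "annihilates V b"
  unfolding annihilates_def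
  using annihilated_seq_eq_zero[OF monic c0 annihilates_poly_shift[OF rec] window] by blast

lemma min_degree_annihilator_dvd:
  fixes h :: "'a::field poly"
  assumes h: "h \<noteq> 0" "annihilates h b"
    and min: "\<And>G. G \<noteq> 0 \<Longrightarrow> annihilates G b \<Longrightarrow> degree h \<le> degree G"
    and F: "annihilates F b"
  shows "h dvd F"
proof (rule ccontr)
  assume "\<not> h dvd F"
  then have "F mod h \<noteq> 0" by (simp add: mod_eq_0_iff_dvd)
  moreover have "annihilates (F mod h) b"
  proof -
    have "poly_shift (F mod h) b l = poly_shift F b l - poly_shift (F div h) (poly_shift h b) l" for l
      by (simp flip: poly_shift_mult add: minus_div_mult_eq_mod[symmetric] poly_shift_diff)
    moreover have "poly_shift h b = (\<lambda>_. 0)" using h(2) by (auto simp: annihilates_def)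
    ultimately show ?thesis using F by (simp add: annihilates_def)
  qed
  ultimately have "degree h \<le> degree (F mod h)" by (rule min)
  moreover have "degree (F mod h) < degree h" using degree_mod_less[OF h(1)] \<open>F mod h \<noteq> 0\<close> by auto
  ultimately show False by simp
qed

lemma dvd_prime_power_imp_dvd_pred:
  fixes p h :: "'a::field poly"
  assumes p: "prime_elem p" and dvd: "h dvd p ^ s" and not_dvd: "\<not> p ^ s dvd h"
  shows "h dvd p ^ (s - 1)"
proof -
  obtain w where w: "p ^ s = h * w" using dvd by (elim dvdE)
  obtain a c where ac: "a + c = s" "p ^ a dvd h" "p ^ c dvd w"
    using prime_elem_power_dvd_prod[OF _ p, of s h w] w by auto
  have "c \<noteq> 0" using ac not_dvd by (metis add_0_right)
  then have "p dvd w" using ac(3) by (metis dvd_power dvd_trans zero_less_iff_neq_zero)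
  then obtain w' where w': "w = p * w'" by (elim dvdE)
  have "p * p ^ (s - 1) = p * (h * w')"
    using w w' \<open>c \<noteq> 0\<close> ac(1) by (simp add: power_eq_if[of p s] split: if_splits)
  then have "p ^ (s - 1) = h * w'" using p by (simp add: prime_elem_def)
  then show ?thesis by simp
qed

text \<open>If \<open>p\<^sup>s\<close> annihilates \<open>b\<close> but \<open>p\<^sup>s\<^sup>-\<^sup>1\<close> does not, the minimal annihilator of \<open>b\<close> is \<open>p\<^sup>s\<close>
  itself, so no polynomial of smaller degree can give a kernel vector.\<close>

lemma invertible_toeplitz_if_not_annihilated:
  fixes p :: "'a::field poly"
  assumes p: "irreducible p" "lead_coeff p = 1" and C: "C = p ^ s"
    and c0: "coeff C 0 \<noteq> 0" and rec: "annihilates C b"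
    and not_rec: "\<not> annihilates (p ^ (s - 1)) b"
  shows "invertible_mat (toeplitz_mat (degree C) b)"
proof (rule ccontr)
  let ?n = "degree C"
  have monic: "lead_coeff C = 1" using p(2) C by (simp add: lead_coeff_power)
  assume "\<not> invertible_mat (toeplitz_mat ?n b)"
  then obtain V where V: "V \<noteq> 0" "degree V < ?n" "\<And>i. i < ?n \<Longrightarrow> poly_shift V b (- int i) = 0"
    unfolding toeplitz_mat_singular_iff by blast
  have "poly_shift V b j = 0" if "1 - int ?n \<le> j" "j < 1" for j
    using V(3)[of "nat (- j)"] that by simp
  then have "annihilates V b"
    using annihilates_if_window_annihilates[OF monic c0 rec, of "1 - int ?n"] by simp
  then obtain h where h: "h \<noteq> 0" "annihilates h b"
    and min: "\<And>G. G \<noteq> 0 \<Longrightarrow> annihilates G b \<Longrightarrow> degree h \<le> degree G"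
    using ex_has_least_nat[of "\<lambda>F. F \<noteq> 0 \<and> annihilates F b" V degree] V(1) by blast
  have "h dvd p ^ s" using min_degree_annihilator_dvd[OF h min] rec C by blast
  moreover have "\<not> p ^ s dvd h"
  proof
    assume "p ^ s dvd h"
    then have "degree (p ^ s) \<le> degree h" using h(1) by (rule dvd_imp_degree_le)
    also have "\<dots> \<le> degree V" using min V(1) \<open>annihilates V b\<close> .
    finally show False using V(2) C by simp
  qed
  ultimately have "h dvd p ^ (s - 1)"
    by (rule dvd_prime_power_imp_dvd_pred[OF field_poly_irreducible_imp_prime[OF p(1)]])
  then obtain w where w: "p ^ (s - 1) = w * h" by (metis dvd_def mult.commute)
  have "poly_shift (p ^ (s - 1)) b l = poly_shift w (poly_shift h b) l" for l
    by (simp only: w poly_shift_mult)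
  moreover have "poly_shift h b = (\<lambda>_. 0)" using h(2) by (auto simp: annihilates_def)
  ultimately show False using not_rec by (simp add: annihilates_def)
qed

lemma fragment_not_annihilated:
  fixes p :: "'a::field poly"
  assumes monic: "lead_coeff p = 1" and deg: "degree p \<ge> 1" and n: "n = s * degree p"
    and s: "s \<ge> 1" and m: "m = (n + 1) div 2"
    and first: "b (- int m) = c" and last: "b (int m - 1) = a"
    and zeros: "\<And>j. - int m < j \<Longrightarrow> j < int m - 1 \<Longrightarrow> b j = 0"
    and a: "a \<noteq> 0" and even_linear: "even n \<Longrightarrow> degree p = 1 \<Longrightarrow> coeff p 0 ^ (n - 1) * c + a \<noteq> 0"
  shows "\<not> annihilates (p ^ (s - 1)) b"
proof -
  let ?h = "p ^ (s - 1)"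
  let ?D = "degree ?h"
  have monic_h: "lead_coeff ?h = 1" using monic by (simp add: lead_coeff_power)
  have "p \<noteq> 0" using monic by auto
  then have D: "?D = n - degree p" using n by (simp add: degree_power_eq diff_mult_distrib)
  show ?thesis
  proof (cases "even n \<and> degree p = 1")
    case False
    let ?l = "int m - 1 - int ?D"
    have "2 * m + degree p \<ge> n + 2" using False m deg by (auto elim!: evenE oddE)
    moreover have "int ?D = int n - int (degree p)" using D n s by simp
    ultimately have "poly_shift ?h b ?l = (\<Sum>i\<in>{?D}. coeff ?h i * b (?l + int i))"
      unfolding poly_shift_def by (intro sum.mono_neutral_right) (auto intro!: zeros)
    then have "poly_shift ?h b ?l = a" using monic_h last by simp
    then show ?thesis using a by (auto simp: annihilates_def)
  next
    case True
    then have D: "?D = n - 1" "n \<ge> 2" using D n s by (auto elim!: evenE)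
    have "poly_shift ?h b (- int m) = (\<Sum>i\<in>{0, ?D}. coeff ?h i * b (- int m + int i))"
      unfolding poly_shift_def using D True m
      by (intro sum.mono_neutral_right) (auto intro!: zeros elim!: evenE)
    then have "poly_shift ?h b (- int m) = coeff p 0 ^ (n - 1) * c + a"
      using monic_h first last D True n m by (auto simp: coeff_0_power elim!: evenE)
    then show ?thesis using even_linear True unfolding annihilates_def by metis
  qed
qed

section \<open>Symmetric sequences\<close>

lemma poly_shift_antipalindromic_eq_0:
  fixes G :: "'a::field poly"
  assumes two: "(2::'a) \<noteq> 0" and anti: "reflect_poly G = - G"
    and sym: "\<And>i. i \<le> degree G \<Longrightarrow> b (l + int i) = b (l + int (degree G - i))"
  shows "poly_shift G b l = 0"
proof -
  let ?D = "degree G"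
  have "poly_shift G b l = (\<Sum>i\<le>?D. coeff G i * b (l + int (?D - i)))"
    unfolding poly_shift_def by (rule sum.cong) (auto simp: sym)
  also have "\<dots> = (\<Sum>i\<le>?D. coeff G (?D - i) * b (l + int i))"
    using sum.atLeastAtMost_rev[of "\<lambda>i. coeff G (?D - i) * b (l + int i)" 0 ?D]
    by (simp add: atLeast0AtMost)
  also have "\<dots> = (\<Sum>i\<le>?D. coeff (reflect_poly G) i * b (l + int i))"
    by (rule sum.cong) (simp_all add: coeff_reflect_poly)
  also have "\<dots> = - poly_shift G b l" by (simp add: anti poly_shift_def sum_negf)
  finally have "2 * poly_shift G b l = 0" by simp
  then show ?thesis using two by simp
qed

lemma reflect_poly_linear: "reflect_poly [:a, 1:] = [:1, a::'a::field:]"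
  by (intro poly_eqI) (auto simp: coeff_reflect_poly coeff_pCons split: nat.split)

lemma symmetric_seq_poly_shift_even:
  fixes b :: "int \<Rightarrow> 'a::field"
  assumes two: "(2::'a) \<noteq> 0" and n: "even n" "n \<noteq> 0"
    and sym: "\<And>d. - int n \<le> d \<Longrightarrow> d \<le> int n - 1 \<Longrightarrow> b d = b (-1 - d)"
  shows "poly_shift ([:-1, 1:] ^ (n - 1)) b (- int (n div 2)) = 0"
proof (rule poly_shift_antipalindromic_eq_0[OF two])
  let ?l = "- int (n div 2)"
  have "reflect_poly [:-1, 1::'a:] = - [:-1, 1:]" by (simp add: reflect_poly_linear)
  moreover have "odd (n - 1)" using n by (auto elim!: evenE)
  ultimately show "reflect_poly ([:-1, 1:] ^ (n - 1)) = - ([:-1, 1::'a:] ^ (n - 1))"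
    by (metis reflect_poly_power power_minus_odd)
  fix i assume "i \<le> degree ([:-1, 1::'a:] ^ (n - 1))"
  then have i: "i \<le> n - 1" by (simp add: degree_power_eq)
  have "-1 - (?l + int i) = ?l + int (n - 1 - i)" using i n by (auto elim!: evenE simp: of_nat_diff)
  moreover have "- int n \<le> ?l + int i" "?l + int i \<le> int n - 1" using i n by auto
  ultimately show "b (?l + int i) = b (?l + int (degree ([:-1, 1::'a:] ^ (n - 1)) - i))"
    using sym by (metis degree_linear_power)
qed

lemma symmetric_seq_poly_shift_odd:
  fixes b :: "int \<Rightarrow> 'a::field"
  assumes two: "(2::'a) \<noteq> 0" and n: "odd n"
    and sym: "\<And>d. - int n \<le> d \<Longrightarrow> d \<le> int n - 1 \<Longrightarrow> b d = b (-1 - d)"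
    and rec: "annihilates [:1, 1:] (poly_shift ([:1, 1:] ^ (n - 1)) b)"
  shows "poly_shift ([:1, 1:] ^ (n - 1)) b (- int ((n + 1) div 2)) = 0"
proof -
  let ?l = "- int ((n + 1) div 2)" and ?G = "[:-1, 1:] * [:1, 1::'a:] ^ (n - 1)"
  let ?g = "poly_shift ([:1, 1:] ^ (n - 1)) b"
  have "reflect_poly [:-1, 1::'a:] = - [:-1, 1:]" "reflect_poly [:1, 1::'a:] = [:1, 1:]"
    by (simp_all add: reflect_poly_linear)
  then have "reflect_poly ?G = - ?G"
    by (simp only: reflect_poly_mult reflect_poly_power minus_mult_left)
  moreover have "degree ?G = n" using n by (subst degree_mult_eq) (auto simp: degree_linear_power)
  moreover have "b (?l + int i) = b (?l + int (n - i))" if "i \<le> n" for i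
  proof -
    have "-1 - (?l + int i) = ?l + int (n - i)" using that n by (auto elim!: oddE simp: of_nat_diff)
    moreover have "- int n \<le> ?l + int i" "?l + int i \<le> int n - 1" using that n by (auto elim!: oddE)
    ultimately show ?thesis using sym by metis
  qed
  ultimately have "poly_shift ?G b ?l = 0" by (intro poly_shift_antipalindromic_eq_0[OF two]) auto
  then have "?g (?l + 1) = ?g ?l" by (simp only: poly_shift_mult) (simp add: poly_shift_pCons)
  moreover have "?g ?l + ?g (?l + 1) = 0"
    using rec[unfolded annihilates_def, rule_format, of ?l] by (simp add: poly_shift_pCons)
  ultimately have "2 * ?g ?l = 0" by simp
  then show ?thesis using two by simp
qed

lemma symmetric_recurrent_toeplitz_singular:
  fixes p :: "'a::field poly"
  assumes two: "(2::'a) \<noteq> 0" and C: "C = p ^ s" and s: "s \<ge> 1" and n: "n = degree C"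
    and p: "p = [:(-1) ^ (n - 1), 1:]" and rec: "annihilates C b"
    and sym: "\<And>d. - int n \<le> d \<Longrightarrow> d \<le> int n - 1 \<Longrightarrow> b d = b (-1 - d)"
  shows "\<not> invertible_mat (toeplitz_mat n b)"
proof
  assume inv: "invertible_mat (toeplitz_mat n b)"
  have "n = s" using n C p by (simp add: degree_linear_power)
  then have p_pow: "p * p ^ (n - 1) = C" using C s by (simp flip: power_Suc)
  define g where "g = poly_shift (p ^ (n - 1)) b"
  have rec_g: "annihilates p g"
    using rec by (simp add: annihilates_def g_def flip: poly_shift_mult p_pow)
  have "g l = 0" for l
  proof (rule annihilated_seq_eq_zero[OF _ _ rec_g])
    show "lead_coeff p = 1" "coeff p 0 \<noteq> 0" using p by simp_all
    fix j assume "- int ((n + 1) div 2) \<le> j" "j < - int ((n + 1) div 2) + int (degree p)"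
    then have j: "j = - int ((n + 1) div 2)" using p by simp
    show "g j = 0"
    proof (cases "even n")
      case True
      then have "p = [:-1, 1:]" "n div 2 = (n + 1) div 2" using p \<open>n = s\<close> s by auto
      then show ?thesis using symmetric_seq_poly_shift_even[of n b, OF two True _ sym] j \<open>n = s\<close> s
        by (simp add: g_def)
    next
      case False
      then have "p = [:1, 1:]" using p by simp
      then show ?thesis using symmetric_seq_poly_shift_odd[of n b, OF two False sym] rec_g j
        by (simp add: g_def)
    qed
  qed
  moreover have "degree (p ^ (n - 1)) < n" "p ^ (n - 1) \<noteq> 0"
    using p \<open>n = s\<close> s by (simp_all add: degree_power_eq)
  ultimately show False
    using invertible_toeplitz_annihilator_eq_0[OF inv] unfolding g_def by blast
qed

section \<open>The equation \<open>X = X\<^sup>* \<Phi>\<close>\<close>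

lemma monic_degree_1_eq:
  assumes "degree p = 1" "lead_coeff p = 1"
  shows "p = [:coeff p 0, 1:]"
  using assms by (intro poly_eqI) (auto simp: coeff_pCons coeff_eq_0 split: nat.split)

lemma monic_irreducible_root_eq:
  fixes p :: "'a::field poly"
  assumes irr: "irreducible p" and monic: "lead_coeff p = 1" and root: "poly p c = 0"
  shows "p = [:-c, 1:]"
proof -
  obtain q where q: "p = [:-c, 1:] * q" using root by (auto simp: poly_eq_0_iff_dvd elim: dvdE)
  have "\<not> is_unit [:-c, 1:]" by (simp add: is_unit_iff_degree)
  then have "is_unit q" using irreducibleD[OF irr q] by blast
  then have "degree q = 0" "q \<noteq> 0" by (metis is_unit_iff_degree not_is_unit_0)+
  moreover have "lead_coeff q = 1" using monic lead_coeff_mult[of "[:-c, 1:]" q] by (simp add: q)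
  ultimately have "q = 1" by (metis degree_0_id one_pCons)
  then show ?thesis using q by simp
qed

lemma irreducible_degree_nonzero:
  fixes p :: "'a::field poly"
  shows "irreducible p \<Longrightarrow> degree p \<noteq> 0"
  using is_unit_iff_degree[of p] by (auto simp: irreducible_def)

lemma mat_star_mult_frobenius_block_index:
  assumes X: "X \<in> carrier_mat n n" and n: "n = degree C" and ij: "i < n" "j < n"
  shows "(mat_star cj X * frobenius_block C) $$ (i, j) =
    (if j = n - 1 then - (\<Sum>t<n. coeff C t * cj (X $$ (t, i))) else cj (X $$ (j + 1, i)))"
proof -
  have "(mat_star cj X * frobenius_block C) $$ (i, j) =
     (\<Sum>t<n. cj (X $$ (t, i)) * (if j = n - 1 then - coeff C t else if t = j + 1 then 1 else 0))"
    using X n ij by (simp add: mat_star_def frobenius_block_def scalar_prod_def atLeast0LessThan)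
  also have "\<dots> = (if j = n - 1 then - (\<Sum>t<n. coeff C t * cj (X $$ (t, i)))
                    else cj (X $$ (j + 1, i)))"
    using ij by (cases "j = n - 1") (auto simp: sum_negf mult.commute if_distrib cong: if_cong)
  finally show ?thesis .
qed

lemma shift_invariant_mat_index:
  assumes shift: "\<And>i j. i + 1 < n \<Longrightarrow> j + 1 < n \<Longrightarrow> X $$ (i + 1, j + 1) = X $$ (i, j)"
    and ij: "i < n" "j < n"
  shows "X $$ (i, j) = X $$ (nat (int i - int j), nat (int j - int i))"
proof -
  have diag: "X $$ (i + k, j + k) = X $$ (i, j)" if "i + k < n" "j + k < n" for i j k
    using that by (induction k) (simp_all add: shift[symmetric])
  show ?thesis
    using ij diag[of 0 i "j - i"] diag[of "i - j" j 0] by (cases "i \<le> j") (simp_all add: nat_diff_distrib)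
qed

lemma involution_field_hom:
  assumes "involution cj" shows "field_hom cj"
proof -
  have add: "cj (a + b) = cj a + cj b" and mult: "cj (a * b) = cj a * cj b" and invol: "cj (cj a) = a"
    for a b using assms by (simp_all add: involution_def)
  have "cj 0 = 0" using add[of 0 0] by (metis add_cancel_right_right add_0)
  moreover have "cj 1 = 1"
    using mult[of 1 1] invol[of 1] \<open>cj 0 = 0\<close> by (metis mult_cancel_left1 zero_neq_one)
  ultimately show ?thesis by unfold_locales (simp_all add: add mult)
qed

text \<open>The sequence \<open>(a\<^sub>d)\<close> with \<open>X = [a\<^sub>j\<^sub>-\<^sub>i]\<close> read off a solution \<open>X\<close>; the value at \<open>-n\<close> is not
  an entry of \<open>X\<close> and is chosen so that \<open>a\<^sub>d = cj (a\<^sub>-\<^sub>1\<^sub>-\<^sub>d)\<close> also holds for \<open>d = -n\<close>.\<close>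

definition solution_seq :: "('a \<Rightarrow> 'a) \<Rightarrow> nat \<Rightarrow> 'a mat \<Rightarrow> int \<Rightarrow> 'a" where
  "solution_seq cj n X d =
     (if d = - int n then cj (X $$ (0, n - 1)) else X $$ (nat (- d), nat d))"

context
  fixes cj :: "'a::field \<Rightarrow> 'a"
  assumes involution: "involution cj"
begin

interpretation field_hom cj by (rule involution_field_hom[OF involution])

lemma conj_conj [simp]: "cj (cj a) = a"
  using involution by (simp add: involution_def)

lemma toeplitz_mat_solves:
  assumes monic: "lead_coeff C = 1" and n: "n = degree C" and rec: "annihilates C b"
    and sym: "\<And>d. b d = cj (b (-1 - d))"
  shows "toeplitz_mat n b = mat_star cj (toeplitz_mat n b) * frobenius_block C"
proof (rule eq_matI)
  fix i j assume "i < dim_row (mat_star cj (toeplitz_mat n b) * frobenius_block C)"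
    "j < dim_col (mat_star cj (toeplitz_mat n b) * frobenius_block C)"
  then have ij: "i < n" "j < n" using n by (simp_all add: mat_star_def frobenius_block_def)
  note entry = mat_star_mult_frobenius_block_index[OF toeplitz_mat_carrier n ij, of cj b]
  show "toeplitz_mat n b $$ (i, j) = (mat_star cj (toeplitz_mat n b) * frobenius_block C) $$ (i, j)"
  proof (cases "j = n - 1")
    case False
    then have "j + 1 < n" using ij by simp
    moreover have "b (int j - int i) = cj (b (int i - int (j + 1)))"
      using sym[of "int j - int i"] by (simp add: algebra_simps)
    ultimately show ?thesis using entry False ij by simp
  next
    case True
    have "cj (b (int i - int t)) = b (- int i - 1 + int t)" for t
      using sym[of "- int i - 1 + int t"] by (simp add: algebra_simps)
    then have "(mat_star cj (toeplitz_mat n b) * frobenius_block C) $$ (i, j)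
        = - (\<Sum>t<n. coeff C t * b (- int i - 1 + int t))"
      using entry True ij by simp
    also have "\<dots> = b (- int i - 1 + int n)"
      using rec n monic poly_shift_split_last[of C b "- int i - 1"]
      by (simp add: annihilates_def add_eq_0_iff)
    also have "\<dots> = toeplitz_mat n b $$ (i, j)" using True ij by (simp add: of_nat_diff algebra_simps)
    finally show ?thesis by simp
  qed
qed (use n in \<open>simp_all add: mat_star_def frobenius_block_def\<close>)

lemma solution_index:
  assumes X: "X \<in> carrier_mat n n" and n: "n = degree C"
    and solves: "X = mat_star cj X * frobenius_block C" and ij: "i < n" "j < n"
  shows "X $$ (i, j) =
    (if j = n - 1 then - (\<Sum>t<n. coeff C t * cj (X $$ (t, i))) else cj (X $$ (j + 1, i)))"
  using arg_cong[OF solves, of "\<lambda>M. M $$ (i, j)"] mat_star_mult_frobenius_block_index[OF X n ij]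
  by simp

lemma solution_seq_index:
  assumes X: "X \<in> carrier_mat n n" and n: "n = degree C"
    and solves: "X = mat_star cj X * frobenius_block C" and ij: "i < n" "j < n"
  shows "X $$ (i, j) = solution_seq cj n X (int j - int i)"
proof -
  have "X $$ (i + 1, j + 1) = X $$ (i, j)" if "i + 1 < n" "j + 1 < n" for i j
    using solution_index[OF X n solves, of i j] solution_index[OF X n solves, of "j + 1" i] that
    by auto
  then have "X $$ (i, j) = X $$ (nat (int i - int j), nat (int j - int i))"
    by (rule shift_invariant_mat_index[OF _ ij])
  then show ?thesis using ij by (simp add: solution_seq_def)
qed

lemma solution_eq_toeplitz_mat:
  assumes X: "X \<in> carrier_mat n n" and n: "n = degree C"
    and solves: "X = mat_star cj X * frobenius_block C"
  shows "X = toeplitz_mat n (solution_seq cj n X)"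
  by (rule eq_matI) (use X solution_seq_index[OF X n solves] in auto)

lemma solution_seq_symmetric:
  assumes X: "X \<in> carrier_mat n n" and n: "n = degree C"
    and solves: "X = mat_star cj X * frobenius_block C"
    and d: "- int n \<le> d" "d \<le> int n - 1"
  shows "solution_seq cj n X d = cj (solution_seq cj n X (-1 - d))"
proof -
  let ?a = "solution_seq cj n X"
  consider "d = - int n" | "d = int n - 1" | "- int n < d" "d < int n - 1" using d by linarith
  then show ?thesis
  proof cases
    case 3
    have e: "int (nat d) - int (nat (- d)) = d" "int (nat (- d)) - int (nat d + 1) = -1 - d" by auto
    have "?a d = X $$ (nat (- d), nat d)" "?a (-1 - d) = X $$ (nat d + 1, nat (- d))"
      using solution_seq_index[OF X n solves, of "nat (- d)" "nat d"]
        solution_seq_index[OF X n solves, of "nat d + 1" "nat (- d)"] 3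
      unfolding e by auto
    then show ?thesis using solution_index[OF X n solves, of "nat (- d)" "nat d"] 3 by simp
  qed (use d in \<open>auto simp: solution_seq_def nat_diff_distrib\<close>)
qed

lemma solution_seq_recurrent:
  assumes X: "X \<in> carrier_mat n n" and n: "n = degree C" and monic: "lead_coeff C = 1"
    and solves: "X = mat_star cj X * frobenius_block C"
    and l: "- int n \<le> l" "l \<le> -1"
  shows "poly_shift C (solution_seq cj n X) l = 0"
proof -
  let ?a = "solution_seq cj n X"
  note X_a = solution_seq_index[OF X n solves]
  define i where "i = nat (-1 - l)"
  have i: "i < n" "l = -1 - int i" using l by (auto simp: i_def)
  have idx: "int (n - 1) - int i = l + int n" using i by (simp add: of_nat_diff)
  have "?a (l + int n) = X $$ (i, n - 1)" using X_a[of i "n - 1"] i unfolding idx by simp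
  also have "\<dots> = - (\<Sum>t<n. coeff C t * cj (X $$ (t, i)))"
    using solution_index[OF X n solves, of i "n - 1"] i by simp
  also have "\<dots> = - (\<Sum>t<n. coeff C t * ?a (l + int t))"
    using X_a[of _ i] solution_seq_symmetric[OF X n solves, of "l + int _"] i by simp
  finally show ?thesis using monic n by (simp add: poly_shift_split_last)
qed

lemma poly_shift_reflect_conj:
  "poly_shift (map_poly cj (reflect_poly F)) (\<lambda>d. cj (b (-1 - d))) l =
    cj (poly_shift F b (-1 - l - int (degree F)))"
proof -
  let ?D = "degree F" and ?m = "-1 - l - int (degree F)"
  have "degree (map_poly cj (reflect_poly F)) \<le> ?D"
    by (rule order.trans[OF map_poly_degree_leq degree_reflect_poly_le])
  then have "poly_shift (map_poly cj (reflect_poly F)) (\<lambda>d. cj (b (-1 - d))) l =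
      (\<Sum>i\<le>?D. cj (coeff F (?D - i) * b (?m + int (?D - i))))"
    by (subst poly_shift_conv_sum)
      (auto simp: coeff_map_poly coeff_reflect_poly hom_mult of_nat_diff algebra_simps intro!: sum.cong)
  also have "\<dots> = cj (\<Sum>i\<le>?D. coeff F i * b (?m + int i))"
    using sum.atLeastAtMost_rev[of "\<lambda>i. coeff F i * b (?m + int i)" 0 ?D]
    by (simp add: hom_sum atLeast0AtMost)
  finally show ?thesis by (simp add: poly_shift_def)
qed

lemma annihilates_conj_reversal:
  assumes vee: "C = poly_vee cj C" and rec: "annihilates C b"
  shows "annihilates C (\<lambda>d. cj (b (-1 - d)))"
  unfolding annihilates_def
proof
  fix l
  have "poly_shift C (\<lambda>d. cj (b (-1 - d))) l = poly_shift (poly_vee cj C) (\<lambda>d. cj (b (-1 - d))) l"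
    using vee by (rule arg_cong)
  also have "\<dots> = inverse (cj (coeff C 0)) * cj (poly_shift C b (-1 - l - int (degree C)))"
    by (simp add: poly_vee_def poly_shift_smult poly_shift_reflect_conj)
  finally show "poly_shift C (\<lambda>d. cj (b (-1 - d))) l = 0" using rec by (simp add: annihilates_def)
qed

lemma invertible_solution_coeff_0_nonzero:
  assumes X: "X \<in> carrier_mat n n" and n: "n = degree C" and monic: "lead_coeff C = 1"
    and inv: "invertible_mat X" and solves: "X = mat_star cj X * frobenius_block C"
  shows "coeff C 0 \<noteq> 0"
proof
  assume c0: "coeff C 0 = 0"
  let ?a = "solution_seq cj n X"
  obtain V where CV: "C = pCons 0 V" using c0 by (cases C) simp
  then have "V \<noteq> 0" "degree V < n" using monic n by auto
  moreover have "poly_shift V ?a (- int i) = 0" if "i < n" for i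
    using solution_seq_recurrent[OF X n monic solves, of "- int i - 1"] that
    by (simp add: CV poly_shift_pCons)
  moreover have "invertible_mat (toeplitz_mat n ?a)"
    using inv by (subst (asm) solution_eq_toeplitz_mat[OF X n solves])
  ultimately show False using invertible_toeplitz_annihilator_eq_0[of n ?a V] by blast
qed

lemma invertible_solution_eq_toeplitz_mat:
  assumes X: "X \<in> carrier_mat n n" and n: "n = degree C" and monic: "lead_coeff C = 1"
    and inv: "invertible_mat X" and solves: "X = mat_star cj X * frobenius_block C"
  obtains b where "annihilates C b" "X = toeplitz_mat n b"
    and "\<And>d. - int n \<le> d \<Longrightarrow> d \<le> int n - 1 \<Longrightarrow> b d = cj (b (-1 - d))"
proof -
  let ?a = "solution_seq cj n X"
  note Xa = solution_eq_toeplitz_mat[OF X n solves] and sym = solution_seq_symmetric[OF X n solves]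
  obtain b where b: "annihilates C b" "\<And>j. - int n \<le> j \<Longrightarrow> j \<le> int n - 1 \<Longrightarrow> b j = ?a j"
    using recurrent_window_extends[OF monic invertible_solution_coeff_0_nonzero[OF assms],
        of "- int n" "int n - 1" ?a] solution_seq_recurrent[OF X n monic solves] n by auto
  show ?thesis
  proof (rule that[OF b(1)])
    have "X = toeplitz_mat n ?a" by (rule Xa)
    also have "\<dots> = toeplitz_mat n b" by (rule toeplitz_mat_cong) (use b(2) in auto)
    finally show "X = toeplitz_mat n b" .
    show "b d = cj (b (-1 - d))" if "- int n \<le> d" "d \<le> int n - 1" for d
      using sym[OF that] b(2)[OF that] b(2)[of "-1 - d"] that by simp
  qed
qed

lemma invertible_solution_poly_vee:
  assumes X: "X \<in> carrier_mat n n" and n: "n = degree C" and monic: "lead_coeff C = 1"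
    and inv: "invertible_mat X" and solves: "X = mat_star cj X * frobenius_block C"
  shows "C = poly_vee cj C"
proof -
  have c0: "coeff C 0 \<noteq> 0" by (rule invertible_solution_coeff_0_nonzero[OF assms])
  obtain b where rec: "annihilates C b" and Xb: "X = toeplitz_mat n b"
    and sym: "\<And>d. - int n \<le> d \<Longrightarrow> d \<le> int n - 1 \<Longrightarrow> b d = cj (b (-1 - d))"
    using invertible_solution_eq_toeplitz_mat[OF assms] by blast
  define \<psi> where "\<psi> = map_poly cj (reflect_poly C)"
  have deg_\<psi>: "degree \<psi> \<le> n"
    unfolding \<psi>_def n by (rule order.trans[OF map_poly_degree_leq degree_reflect_poly_le])
  have "poly_shift \<psi> b l = 0" if "- int n \<le> l" "l < - int n + int (degree C)" for l
  proof -
    have "poly_shift \<psi> b l = poly_shift \<psi> (\<lambda>d. cj (b (-1 - d))) l"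
      using deg_\<psi> that n by (intro poly_shift_cong sym) auto
    also have "\<dots> = 0" using rec by (simp add: \<psi>_def poly_shift_reflect_conj annihilates_def)
    finally show ?thesis .
  qed
  then have "annihilates \<psi> b" by (rule annihilates_if_window_annihilates[OF monic c0 rec])
  define f where "f = \<psi> - smult (cj (coeff C 0)) C"
  have "annihilates f b"
    using \<open>annihilates \<psi> b\<close> rec by (simp add: f_def annihilates_def poly_shift_diff poly_shift_smult)
  moreover have "degree f \<le> n" using deg_\<psi> n
    unfolding f_def by (intro degree_diff_le) (auto intro: order.trans[OF degree_smult_le])
  moreover have "coeff f n = 0" using monic n by (simp add: f_def \<psi>_def coeff_map_poly coeff_reflect_poly)
  ultimately have "f = 0"
    using invertible_toeplitz_annihilator_eq_0[of n b f] inv Xb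
    by (metis annihilates_def le_neq_implies_less leading_coeff_0_iff)
  then have "\<psi> = smult (cj (coeff C 0)) C" by (simp add: f_def)
  then show ?thesis using c0 by (simp add: poly_vee_def \<psi>_def)
qed

lemma poly_map_poly_conj: "poly (map_poly cj F) (cj x) = cj (poly F x)"
  by (induction F rule: pCons_induct) (simp_all add: map_poly_pCons hom_distribs)

lemma poly_poly_vee:
  assumes "x \<noteq> 0"
  shows "poly (poly_vee cj F) (cj x) = cj (x ^ degree F * poly F (inverse x)) / cj (coeff F 0)"
  using assms
  by (simp add: poly_vee_def poly_map_poly_conj poly_reflect_poly_nz divide_inverse mult.commute)

lemma poly_vee_root_inverse_conj:
  assumes vee: "F = poly_vee cj F" and root: "poly F x = 0" and "x \<noteq> 0"
  shows "poly F (cj (inverse x)) = 0"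
  using poly_poly_vee[of "inverse x" F] vee root assms(3) by simp

lemma poly_vee_odd_degree_eval_minus_one:
  assumes vee: "F = poly_vee cj F" and c0: "coeff F 0 \<noteq> 0" and odd: "odd (degree F)"
  shows "coeff F 0 * cj (poly F (-1)) + poly F (-1) = 0"
proof -
  have "poly F (-1) = poly (poly_vee cj F) (cj (-1))" using vee by (simp add: hom_distribs)
  also have "\<dots> = - cj (poly F (-1)) / cj (coeff F 0)"
    using poly_poly_vee[of "- 1" F] odd by (simp add: hom_distribs)
  finally have "cj (coeff F 0) * poly F (-1) = - cj (poly F (-1))" using c0 by (simp add: field_simps)
  then have "cj (cj (coeff F 0) * poly F (-1)) = cj (- cj (poly F (-1)))" by simp
  then show ?thesis by (simp add: hom_distribs)
qed

lemma poly_vee_coeff_0_nonzero: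
  assumes "F = poly_vee cj F" "F \<noteq> 0"
  shows "coeff F 0 \<noteq> 0"
  using assms by (auto simp: poly_vee_def)

lemma frag_param_even:
  fixes p :: "'a poly"
  assumes two: "(2::'a) \<noteq> 0" and monic: "lead_coeff p = 1"
    and s: "s \<ge> 1" and chi: "chi = p ^ s" and n: "n = degree chi" and even: "even n"
    and vee: "chi = poly_vee cj chi" and not_id: "cj = id \<longrightarrow> p \<noteq> [:(-1) ^ (n - 1), 1:]"
    and k: "cj \<noteq> id \<longrightarrow> k = - cj k \<and> k \<noteq> 0" and a0: "a0 = frag_param chi p n k"
  shows "a0 \<noteq> 0 \<and> (degree p = 1 \<longrightarrow> coeff p 0 ^ (n - 1) * cj a0 + a0 \<noteq> 0)"
proof (cases "degree p = 1 \<and> coeff p 0 ^ (n - 1) = -1")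
  case True
  let ?\<alpha> = "coeff p 0"
  have p: "p = [:?\<alpha>, 1:]" using True monic by (intro monic_degree_1_eq) auto
  have "cj \<noteq> id"
  proof
    assume id: "cj = id"
    have "n \<noteq> 0" using True s unfolding n chi by (subst degree_power_eq) auto
    have "coeff chi 0 \<noteq> 0" using vee chi p by (intro poly_vee_coeff_0_nonzero) auto
    then have "?\<alpha> \<noteq> 0" using chi s by (simp add: coeff_0_power)
    have "poly p (- ?\<alpha>) = 0" by (subst (1) p) simp
    then have "poly chi (- ?\<alpha>) = 0" using chi s by simp
    then have "poly chi (inverse (- ?\<alpha>)) = 0"
      using poly_vee_root_inverse_conj[OF vee, of "- ?\<alpha>"] \<open>?\<alpha> \<noteq> 0\<close> id by simp
    then have "poly p (inverse (- ?\<alpha>)) = 0" using chi by simp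
    then have "?\<alpha> + inverse (- ?\<alpha>) = 0" by (subst (asm) (1) p) simp
    then have "?\<alpha> * ?\<alpha> = 1" using \<open>?\<alpha> \<noteq> 0\<close> by (simp add: field_simps)
    moreover obtain t where "n = 2 * Suc t" using even \<open>n \<noteq> 0\<close>
      by (metis evenE mult_0_right not0_implies_Suc)
    then have "n - 1 = Suc (2 * t)" by simp
    ultimately have "?\<alpha> ^ (n - 1) = ?\<alpha>" by (simp add: power_mult power2_eq_square)
    then have "p = [:(-1) ^ (n - 1), 1:]" using True p \<open>n - 1 = Suc (2 * t)\<close> by simp
    then show False using not_id id by simp
  qed
  then have "k = - cj k" "k \<noteq> 0" using k by auto
  moreover have "a0 = k" using True even by (simp add: a0 frag_param_def)
  ultimately show ?thesis using True two by (auto simp: algebra_simps)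
next
  case False
  then have "a0 = 1" using even by (auto simp: a0 frag_param_def)
  then show ?thesis using False by (auto simp: add_eq_0_iff minus_equation_iff)
qed

lemma frag_param_odd:
  fixes p :: "'a poly"
  assumes irr: "irreducible p" and monic: "lead_coeff p = 1"
    and chi: "chi = p ^ s" and n: "n = degree chi" and odd: "odd n"
    and vee: "chi = poly_vee cj chi" and not_id: "cj = id \<longrightarrow> p \<noteq> [:(-1) ^ (n - 1), 1:]"
    and k: "cj \<noteq> id \<longrightarrow> k = - cj k \<and> k \<noteq> 0" and a0: "a0 = frag_param chi p n k"
  shows "a0 \<noteq> 0 \<and> coeff chi 0 * cj a0 + a0 = 0"
proof (cases "p = [:1, 1:]")
  case True
  then have "cj \<noteq> id" using not_id odd by auto
  then have "k = - cj k" "k \<noteq> 0" using k by auto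
  moreover have "a0 = k" using True odd by (simp add: a0 frag_param_def)
  moreover have "coeff chi 0 = 1" using True chi by (simp add: coeff_0_power)
  ultimately show ?thesis by (simp add: add_eq_0_iff)
next
  case False
  then have "a0 = poly chi (-1)" using odd by (simp add: a0 frag_param_def)
  moreover have "poly p (-1) \<noteq> 0" using False monic_irreducible_root_eq[OF irr monic] by force
  moreover have "coeff chi 0 \<noteq> 0" using vee chi monic by (intro poly_vee_coeff_0_nonzero) auto
  ultimately show ?thesis
    using poly_vee_odd_degree_eval_minus_one[OF vee] odd chi n by simp
qed

text \<open>The fragment and its mirror image \<open>d \<mapsto> cj (b (-1 - d))\<close> agree on a window of length
  \<open>n\<close>, so the symmetry holds everywhere.\<close>

lemma fragment_toeplitz_mat_solves:
  fixes p :: "'a poly"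
  assumes two: "(2::'a) \<noteq> 0" and irr: "irreducible p" and monic: "lead_coeff p = 1"
    and s: "s \<ge> 1" and chi: "chi = p ^ s" and n: "n = degree chi"
    and vee: "chi = poly_vee cj chi" and not_id: "cj = id \<longrightarrow> p \<noteq> [:(-1) ^ (n - 1), 1:]"
    and k: "cj \<noteq> id \<longrightarrow> k = - cj k \<and> k \<noteq> 0" and a0: "a0 = frag_param chi p n k"
    and m: "m = (n + 1) div 2" and rec: "annihilates chi b"
    and first: "b (- int m) = cj a0" and last: "b (int m - 1) = a0"
    and zeros: "\<And>j. - int m < j \<Longrightarrow> j < int m - 1 \<Longrightarrow> b j = 0"
  shows "invertible_mat (toeplitz_mat n b)"
    and "toeplitz_mat n b = mat_star cj (toeplitz_mat n b) * frobenius_block chi"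
proof -
  have monic_chi: "lead_coeff chi = 1" using monic chi by (simp add: lead_coeff_power)
  have c0: "coeff chi 0 \<noteq> 0" using vee monic_chi by (intro poly_vee_coeff_0_nonzero) auto
  have "degree p \<noteq> 0" using irr by (rule irreducible_degree_nonzero)
  then have deg_chi: "n = s * degree p" unfolding n chi by (subst degree_power_eq) auto
  have "cj (b (-1 - j)) - b j = 0" for j
  proof (rule annihilated_seq_eq_zero[OF monic_chi c0, of _ "- int m"])
    show "annihilates chi (\<lambda>j. cj (b (-1 - j)) - b j)"
      by (intro annihilates_seq_diff annihilates_conj_reversal[OF vee] rec)
    fix j assume j: "- int m \<le> j" "j < - int m + int (degree chi)"
    then consider "j = - int m" | "j = int m - 1" | "- int m < j" "j < int m - 1"
      using m n by linarith
    then show "cj (b (-1 - j)) - b j = 0"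
      by cases (use first last zeros[of j] zeros[of "-1 - j"] in auto)
  qed
  then show "toeplitz_mat n b = mat_star cj (toeplitz_mat n b) * frobenius_block chi"
    by (intro toeplitz_mat_solves[OF monic_chi n rec]) simp
  have "a0 \<noteq> 0" and "even n \<Longrightarrow> degree p = 1 \<Longrightarrow> coeff p 0 ^ (n - 1) * cj a0 + a0 \<noteq> 0"
    using frag_param_even[OF two monic s chi n _ vee not_id k a0]
      frag_param_odd[OF irr monic chi n _ vee not_id k a0] by auto
  then have "\<not> annihilates (p ^ (s - 1)) b"
    by (intro fragment_not_annihilated[OF monic _ deg_chi s m first last zeros])
      (use \<open>degree p \<noteq> 0\<close> in auto)
  then show "invertible_mat (toeplitz_mat n b)"
    using invertible_toeplitz_if_not_annihilated[OF irr monic chi c0 rec] n by simp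
qed

lemma fragment_sequences_solve:
  fixes p :: "'a poly"
  assumes two: "(2::'a) \<noteq> 0" and irr: "irreducible p" and monic: "lead_coeff p = 1"
    and s: "s \<ge> 1" and chi: "chi = p ^ s" and n: "n = degree chi"
    and vee: "chi = poly_vee cj chi" and not_id: "cj = id \<longrightarrow> p \<noteq> [:(-1) ^ (n - 1), 1:]"
    and k: "cj \<noteq> id \<longrightarrow> k = - cj k \<and> k \<noteq> 0" and a0: "a0 = frag_param chi p n k"
    and m: "m = (n + 1) div 2" and q: "q = min (- int m) (1 - int n)" and r: "r = int n - 1"
  shows "(\<exists>a. has_fragment cj m a0 a \<and> recurrent chi q r a) \<and>
    (\<forall>a. has_fragment cj m a0 a \<and> recurrent chi q r a \<longrightarrow>
       toeplitz_mat n a \<in> carrier_mat n n \<and> invertible_mat (toeplitz_mat n a) \<and>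
       toeplitz_mat n a = mat_star cj (toeplitz_mat n a) * frobenius_block chi)"
proof
  have monic_chi: "lead_coeff chi = 1" using monic chi by (simp add: lead_coeff_power)
  have c0: "coeff chi 0 \<noteq> 0" using vee monic_chi by (intro poly_vee_coeff_0_nonzero) auto
  have "n \<noteq> 0" using irreducible_degree_nonzero[OF irr] s unfolding n chi
    by (subst degree_power_eq) auto
  then have nm: "n = 2 * m \<or> n = 2 * m - 1" "m \<ge> 1" using m by presburger+
  note solves = fragment_toeplitz_mat_solves[OF two irr monic s chi n vee not_id k a0 m]
  show "\<exists>a. has_fragment cj m a0 a \<and> recurrent chi q r a"
  proof -
    have "odd n \<Longrightarrow> coeff chi 0 * cj a0 + a0 = 0"
      using frag_param_odd[OF irr monic chi n _ vee not_id k a0] by blast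
    then obtain b where "annihilates chi b" "b (- int m) = cj a0" "b (int m - 1) = a0"
      "\<And>j. - int m < j \<Longrightarrow> j < int m - 1 \<Longrightarrow> b j = 0"
      using recurrent_fragment_exists[OF monic_chi c0 n \<open>n \<noteq> 0\<close> m] by blast
    then show ?thesis
      by (auto simp: has_fragment_def recurrent_def annihilates_def poly_shift_def)
  qed
  show "\<forall>a. has_fragment cj m a0 a \<and> recurrent chi q r a \<longrightarrow>
      toeplitz_mat n a \<in> carrier_mat n n \<and> invertible_mat (toeplitz_mat n a) \<and>
      toeplitz_mat n a = mat_star cj (toeplitz_mat n a) * frobenius_block chi"
  proof (intro allI impI)
    fix a assume a: "has_fragment cj m a0 a \<and> recurrent chi q r a"
    obtain b where rec: "annihilates chi b" and ba: "\<And>j. q \<le> j \<Longrightarrow> j \<le> r \<Longrightarrow> b j = a j"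
      using recurrent_window_extends[OF monic_chi c0, of q r a] a
      by (auto simp: recurrent_def poly_shift_def)
    have "toeplitz_mat n a = toeplitz_mat n b" using ba q r by (intro toeplitz_mat_cong) auto
    moreover have "b (- int m) = cj a0" "b (int m - 1) = a0"
      "\<And>j. - int m < j \<Longrightarrow> j < int m - 1 \<Longrightarrow> b j = 0"
      using a ba[of "- int m"] ba[of "int m - 1"] ba q r nm by (auto simp: has_fragment_def)
    ultimately show "toeplitz_mat n a \<in> carrier_mat n n \<and> invertible_mat (toeplitz_mat n a) \<and>
        toeplitz_mat n a = mat_star cj (toeplitz_mat n a) * frobenius_block chi"
      using solves[OF rec] by simp
  qed
qed

lemma invertible_solution_imp_conditions:
  fixes p :: "'a poly"
  assumes two: "(2::'a) \<noteq> 0" and monic: "lead_coeff p = 1" and s: "s \<ge> 1"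
    and chi: "chi = p ^ s" and n: "n = degree chi"
    and X: "X \<in> carrier_mat n n" and inv: "invertible_mat X"
    and solves: "X = mat_star cj X * frobenius_block chi"
  shows "chi = poly_vee cj chi \<and> (cj = id \<longrightarrow> p \<noteq> [:(-1) ^ (n - 1), 1:])"
proof
  have monic_chi: "lead_coeff chi = 1" using monic chi by (simp add: lead_coeff_power)
  show "chi = poly_vee cj chi" by (rule invertible_solution_poly_vee[OF X n monic_chi inv solves])
  show "cj = id \<longrightarrow> p \<noteq> [:(-1) ^ (n - 1), 1:]"
  proof (intro impI notI)
    assume id: "cj = id" and p: "p = [:(-1) ^ (n - 1), 1:]"
    obtain b where rec: "annihilates chi b" and Xb: "X = toeplitz_mat n b"
      and sym: "\<And>d. - int n \<le> d \<Longrightarrow> d \<le> int n - 1 \<Longrightarrow> b d = cj (b (-1 - d))"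
      using invertible_solution_eq_toeplitz_mat[OF X n monic_chi inv solves] by blast
    have "\<not> invertible_mat (toeplitz_mat n b)"
      by (rule symmetric_recurrent_toeplitz_singular[OF two chi s n p rec]) (metis sym id id_apply)
    then show False using inv Xb by simp
  qed
qed

lemma obtain_skew_element:
  obtains k where "cj \<noteq> id \<longrightarrow> k = - cj k \<and> k \<noteq> 0"
proof (cases "cj = id")
  case False
  then obtain c where "cj c \<noteq> c" by (auto simp: fun_eq_iff)
  moreover have "cj (c - cj c) = cj c - c" by (simp add: hom_minus)
  ultimately have "c - cj c = - cj (c - cj c)" "c - cj c \<noteq> 0" by simp_all
  then show ?thesis using that by blast
qed (use that in blast)

end

theorem theorem7:
  fixes cj :: "'a::field \<Rightarrow> 'a" and chi p :: "'a poly" and s n :: nat and Phi :: "'a mat"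
  assumes char: "(2::'a) \<noteq> 0"
    and inv: "involution cj"
    and p_irr: "irreducible p" and p_monic: "lead_coeff p = 1"
    and s_pos: "s \<ge> 1"
    and chi_def: "chi = p ^ s"
    and n_def: "n = degree chi"
    and Phi_def: "Phi = frobenius_block chi"
  shows
    "((\<exists>X \<in> carrier_mat n n. invertible_mat X \<and> X = mat_star cj X * Phi) \<longleftrightarrow>
        (chi = poly_vee cj chi \<and> (cj = id \<longrightarrow> p \<noteq> [:(-1) ^ (n - 1), 1:])))
     \<and>
     ((chi = poly_vee cj chi \<and> (cj = id \<longrightarrow> p \<noteq> [:(-1) ^ (n - 1), 1:])) \<longrightarrow>
        (\<forall>k. (cj \<noteq> id \<longrightarrow> k = - cj k \<and> k \<noteq> 0) \<longrightarrow>
           (let m = (n + 1) div 2; a0 = frag_param chi p n k;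
                q = min (- int m) (1 - int n); r = int n - 1
            in (\<exists>a. has_fragment cj m a0 a \<and> recurrent chi q r a) \<and>
               (\<forall>a. has_fragment cj m a0 a \<and> recurrent chi q r a \<longrightarrow>
                   (let X = toeplitz_mat n a in
                      X \<in> carrier_mat n n \<and> invertible_mat X \<and> X = mat_star cj X * Phi)))))"
proof -
  note solve =
    fragment_sequences_solve[OF inv char p_irr p_monic s_pos chi_def n_def _ _ _ refl refl refl refl]
  have "(\<exists>X \<in> carrier_mat n n. invertible_mat X \<and> X = mat_star cj X * Phi) \<longleftrightarrow>
        (chi = poly_vee cj chi \<and> (cj = id \<longrightarrow> p \<noteq> [:(-1) ^ (n - 1), 1:]))"
  proof
    assume "\<exists>X \<in> carrier_mat n n. invertible_mat X \<and> X = mat_star cj X * Phi"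
    then obtain X where "X \<in> carrier_mat n n" "invertible_mat X"
      "X = mat_star cj X * frobenius_block chi"
      unfolding Phi_def by blast
    then show "chi = poly_vee cj chi \<and> (cj = id \<longrightarrow> p \<noteq> [:(-1) ^ (n - 1), 1:])"
      by (rule invertible_solution_imp_conditions[OF inv char p_monic s_pos chi_def n_def])
  next
    assume conds: "chi = poly_vee cj chi \<and> (cj = id \<longrightarrow> p \<noteq> [:(-1) ^ (n - 1), 1:])"
    obtain k where "cj \<noteq> id \<longrightarrow> k = - cj k \<and> k \<noteq> 0" using obtain_skew_element[OF inv] .
    from solve[OF conds[THEN conjunct1] conds[THEN conjunct2] this] obtain a where
      "toeplitz_mat n a \<in> carrier_mat n n" "invertible_mat (toeplitz_mat n a)"
      "toeplitz_mat n a = mat_star cj (toeplitz_mat n a) * frobenius_block chi"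
      by blast
    then show "\<exists>X \<in> carrier_mat n n. invertible_mat X \<and> X = mat_star cj X * Phi"
      unfolding Phi_def by blast
  qed
  then show ?thesis using solve unfolding Let_def Phi_def by blast
qed

end
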